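(* Let $E\subseteq\mathcal F(\mathbb Z^s,\bar K)$ be a translation-invariant subspace of finite dimension. Then $E$ is a characteristic subspace (i.e., spanned by finitely many characters $\theta\in\mathrm{Char}(\mathbb Z^s,\bar K^\times)$) if and only if its period lattice $\Lambda(E)$ is a characteristic sublattice, i.e. has finite index in $\mathbb Z^s$ coprime to $p$.
   Context: $K=\mathrm{GF}(p^r)$, $\bar K$ an algebraic closure; $\mathcal F(\mathbb Z^s,\bar K)$ is the space of all functions $\mathbb Z^s\to\bar K$; translation-invariant means stable under all $\tau_v:f\mapsto f(\cdot+v)$. $\mathrm{Char}(\mathbb Z^s,\bar K^\times)$ is the set of homomorphisms $\mathbb Z^s\to\bar K^\times$. The period lattice of $E$ is $\Lambda(E)=\{v\in\mathbb Z^s:\tau_v f=f\ \forall f\in E\}$ (it has finite index since $E$ is finite dimensional). A sublattice is characteristic if it equals $\bigcap_{i=1}^m\ker(\theta_i)$ for some characters $\theta_1,\ldots,\theta_m$; a finite-index sublattice is characteristic iff its index is coprime to $p$. *)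

theory Defs
  imports "HOL-Algebra.Algebraic_Closure_Type" "HOL-Analysis.Finite_Cartesian_Product"
    "HOL-Library.Function_Algebras"
begin

definition fscale :: "'k::field \<Rightarrow> ('z \<Rightarrow> 'k) \<Rightarrow> ('z \<Rightarrow> 'k)" where
  "fscale c f = (\<lambda>x. c * f x)"

abbreviation fspan :: "('z \<Rightarrow> 'k::field) set \<Rightarrow> ('z \<Rightarrow> 'k) set" where
  "fspan \<equiv> Modules.module.span fscale"

abbreviation fsubspace :: "('z \<Rightarrow> 'k::field) set \<Rightarrow> bool" where
  "fsubspace \<equiv> Modules.module.subspace fscale"

definition fin_dim_subspace :: "('z \<Rightarrow> 'k::field) set \<Rightarrow> bool" where
  "fin_dim_subspace E \<longleftrightarrow> fsubspace E \<and> (\<exists>B. finite B \<and> fspan B = E)"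

definition transl :: "'z::plus \<Rightarrow> ('z \<Rightarrow> 'k) \<Rightarrow> ('z \<Rightarrow> 'k)" where
  "transl v f = (\<lambda>x. f (x + v))"

definition translation_invariant :: "('z::plus \<Rightarrow> 'k) set \<Rightarrow> bool" where
  "translation_invariant E \<longleftrightarrow> (\<forall>v f. f \<in> E \<longrightarrow> transl v f \<in> E)"

definition is_character :: "('z::monoid_add \<Rightarrow> 'k::field) \<Rightarrow> bool" where
  "is_character \<theta> \<longleftrightarrow> (\<forall>x. \<theta> x \<noteq> 0) \<and> (\<forall>x y. \<theta> (x + y) = \<theta> x * \<theta> y)"

definition characteristic_subspace :: "('z::monoid_add \<Rightarrow> 'k::field) set \<Rightarrow> bool" where
  "characteristic_subspace E \<longleftrightarrow>
     (\<exists>C. finite C \<and> (\<forall>\<theta>\<in>C. is_character \<theta>) \<and> fspan C = E)"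

definition period_lattice :: "('z::plus \<Rightarrow> 'k) set \<Rightarrow> 'z set" where
  "period_lattice E = {v. \<forall>f\<in>E. transl v f = f}"

definition characteristic_sublattice :: "('z::monoid_add) set \<Rightarrow> 'k::field itself \<Rightarrow> bool" where
  "characteristic_sublattice L _ \<longleftrightarrow>
     (\<exists>\<Theta> :: ('z \<Rightarrow> 'k) set. finite \<Theta> \<and> (\<forall>\<theta>\<in>\<Theta>. is_character \<theta>) \<and>
        L = {v. \<forall>\<theta>\<in>\<Theta>. \<theta> v = 1})"

text \<open>Index of a subgroup L of an additive group: number of cosets v + L
  (0 if there are infinitely many).\<close>
definition lattice_index :: "('z::plus) set \<Rightarrow> nat" where
  "lattice_index L = card ((\<lambda>v. (\<lambda>w. v + w) ` L) ` UNIV)"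

end

theory Submission
  imports Defs "HOL-Algebra.Sylow" "HOL-Algebra.Multiplicative_Group" "HOL-Number_Theory.Residues"
begin

text \<open>
  If \<open>E\<close> is spanned by characters \<open>\<theta>\<^sub>1, \<dots>, \<theta>\<^sub>m\<close>, its periods are exactly the common kernel of the
  \<open>\<theta>\<^sub>i\<close>. Such a common kernel has finite index prime to \<open>p\<close>. Every element of the algebraic
  closure \<open>K\<close> of \<open>GF(p\<^sup>r)\<close> generates a finite field, so every value of a character of \<open>\<int>\<^sup>s\<close> in
  \<open>K\<^sup>\<times>\<close> is a root of unity and the cosets are the fibres of a map into a finite set; and a coset
  of order \<open>p\<close> in the quotient would give \<open>\<theta>(v)\<^bsup>p^a\<^esup> = 1\<close> with \<open>\<theta>(v) \<noteq> 1\<close>, which the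
  injectivity of Frobenius forbids.

  Conversely, if \<open>\<Lambda>(E)\<close> has index \<open>N\<close> prime to \<open>p\<close>, every \<open>f \<in> E\<close> is \<open>N\<close>-periodic in each
  coordinate. As \<open>K\<close> contains \<open>N\<close> distinct \<open>N\<close>-th roots of unity, discrete Fourier inversion
  writes \<open>f\<close> as a combination of characters; Artin's independence argument, run inside the
  translation-invariant space \<open>E\<close>, shows that each character occurring with a nonzero coefficient
  already lies in \<open>E\<close>.
\<close>

lemma sum_apply: "(\<Sum>a\<in>A. g a) x = (\<Sum>a\<in>A. g a x)"
  by (induct A rule: infinite_finite_induct) auto

interpretation fun_module: Modules.module "fscale :: 'k::field \<Rightarrow> ('z \<Rightarrow> 'k) \<Rightarrow> _"
  by unfold_locales (auto simp: fscale_def fun_eq_iff algebra_simps)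

section \<open>Additive groups as algebraic groups\<close>

definition additive_group :: "'a::ab_group_add monoid" where
  "additive_group = \<lparr>carrier = UNIV, monoid.mult = (+), one = 0\<rparr>"

lemma additive_group_simps [simp]:
  "carrier additive_group = UNIV"
  "x \<otimes>\<^bsub>additive_group\<^esub> y = x + y"
  "\<one>\<^bsub>additive_group\<^esub> = 0"
  by (simp_all add: additive_group_def)

lemma comm_group_additive_group: "comm_group (additive_group :: 'a::ab_group_add monoid)"
proof (rule comm_groupI)
  show "\<exists>y\<in>carrier additive_group. y \<otimes>\<^bsub>additive_group\<^esub> x = \<one>\<^bsub>additive_group\<^esub>"
    for x :: 'a
    by (intro bexI[of _ "- x"]) simp_all
qed (simp_all add: add.assoc add.commute)

lemma group_additive_group: "group (additive_group :: 'a::ab_group_add monoid)"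
  using comm_group_additive_group by (rule comm_group.axioms(2))

lemma additive_group_pow: "x [^]\<^bsub>additive_group\<^esub> n = of_nat n * (x :: 'a::ring_1)"
  by (induct n) (simp_all add: algebra_simps)

lemma subgroup_additive_groupI:
  fixes L :: "'a::ab_group_add set"
  assumes "0 \<in> L" and diff: "\<And>a b. a \<in> L \<Longrightarrow> b \<in> L \<Longrightarrow> a - b \<in> L"
  shows "subgroup L additive_group"
proof -
  have neg: "- a \<in> L" if "a \<in> L" for a
    using diff[OF assms(1) that] by simp
  have "a + b \<in> L" if "a \<in> L" "b \<in> L" for a b
    using diff[OF that(1) neg[OF that(2)]] by simp
  moreover have "inv\<^bsub>additive_group\<^esub> a = - a" for a :: 'a
    by (rule group.inv_equality[OF group_additive_group]) simp_all
  ultimately show ?thesis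
    using assms(1) neg by unfold_locales auto
qed

lemma order_additive_group_Mod: "Coset.order (additive_group Mod L) = lattice_index L"
proof -
  have "r_coset additive_group L v = (\<lambda>w. v + w) ` L" for v
    unfolding r_coset_def by (auto simp: add.commute)
  then show ?thesis
    unfolding Coset.order_def lattice_index_def carrier_FactGroup by simp
qed

context
  fixes L :: "'a::ab_group_add set"
  assumes subgroup: "subgroup L additive_group" and finite_index: "lattice_index L > 0"
begin

private lemma normal: "normal L additive_group"
  by (rule comm_group.subgroup_imp_normal[OF comm_group_additive_group subgroup])

private lemma quotient_group: "group (additive_group Mod L)"
  by (rule normal.factorgroup_is_group[OF normal])

private lemma finite_quotient: "finite (carrier (additive_group Mod L))"
  using finite_index order_additive_group_Mod[of L] card_ge_0_finite
  unfolding Coset.order_def by metis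

private lemma rcos_eq_self_imp_mem: "r_coset additive_group L w = L \<Longrightarrow> w \<in> L"
  using group.rcos_self[OF group_additive_group _ subgroup, of w] by simp

private lemma rcos_pow:
  "r_coset additive_group L v [^]\<^bsub>additive_group Mod L\<^esub> (n::nat)
     = r_coset additive_group L (v [^]\<^bsub>additive_group\<^esub> n)"
  by (rule normal.FactGroup_pow[OF normal]) simp

lemma lattice_index_pow_mem: "v [^]\<^bsub>additive_group\<^esub> lattice_index L \<in> L"
proof (rule rcos_eq_self_imp_mem)
  have "r_coset additive_group L v \<in> carrier (additive_group Mod L)"
    unfolding carrier_FactGroup by simp
  then show "r_coset additive_group L (v [^]\<^bsub>additive_group\<^esub> lattice_index L) = L"
    using group.pow_order_eq_1[OF quotient_group] by (simp flip: rcos_pow order_additive_group_Mod)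
qed

text \<open>Cauchy's theorem for the quotient, via a Sylow subgroup.\<close>
lemma prime_dvd_lattice_index_imp_torsion:
  assumes q: "prime q" and dvd: "q dvd lattice_index L"
  obtains v a where "v \<notin> L" "v [^]\<^bsub>additive_group\<^esub> (q ^ a) \<in> L"
proof -
  define m where "m = multiplicity q (lattice_index L)"
  have "Coset.order (additive_group Mod L) = q ^ m * (lattice_index L div q ^ m)"
    by (simp add: order_additive_group_Mod m_def multiplicity_dvd)
  then obtain Q where Q: "subgroup Q (additive_group Mod L)" "card Q = q ^ m"
    using sylow_thm[OF q quotient_group _ finite_quotient] by blast
  have "m > 0"
    using finite_index dvd q unfolding m_def by (simp add: prime_multiplicity_gt_zero_iff)
  then have "card Q \<ge> 2"
    using Q(2) prime_ge_2_nat[OF q] self_le_power[of q m] by simp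
  then have "\<not> Q \<subseteq> {L}"
    using card_mono[of "{L}" Q] by auto
  then obtain C where C: "C \<in> Q" "C \<noteq> L"
    by blast
  then obtain v where v: "C = r_coset additive_group L v"
    using subgroup.subset[OF Q(1)] unfolding carrier_FactGroup by auto
  have "C [^]\<^bsub>(additive_group Mod L)\<lparr>carrier := Q\<rparr>\<^esub> (q ^ m) = L"
    using group.pow_order_eq_1[OF subgroup.subgroup_is_group[OF Q(1) quotient_group], of C] C Q(2)
    by (simp add: Coset.order_def)
  then have "r_coset additive_group L (v [^]\<^bsub>additive_group\<^esub> (q ^ m)) = L"
    by (simp flip: monoid.nat_pow_consistent[OF group.is_monoid[OF quotient_group]] rcos_pow add: v)
  moreover have "v \<notin> L"
    using C v subgroup.rcos_const[OF subgroup group_additive_group] by blast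
  ultimately show thesis
    using that rcos_eq_self_imp_mem by blast
qed

end

section \<open>Characters\<close>

lemma character_nonzero: "is_character \<theta> \<Longrightarrow> \<theta> x \<noteq> 0"
  unfolding is_character_def by blast

lemma character_add: "is_character \<theta> \<Longrightarrow> \<theta> (x + y) = \<theta> x * \<theta> y"
  unfolding is_character_def by blast

lemma character_zero:
  assumes "is_character \<theta>" shows "\<theta> 0 = 1"
proof -
  have "\<theta> 0 * \<theta> 0 = \<theta> 0 * 1"
    using character_add[OF assms, of 0 0] by simp
  then show ?thesis
    using character_nonzero[OF assms] by (metis mult_left_cancel)
qed

lemma character_diff:
  fixes \<theta> :: "'z::ab_group_add \<Rightarrow> 'k::field"
  assumes "is_character \<theta>" shows "\<theta> (x - y) = \<theta> x / \<theta> y"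
  using character_add[OF assms, of "x - y" y] character_nonzero[OF assms, of y]
  by (simp add: field_simps)

lemma character_pow:
  fixes \<theta> :: "'z::ab_group_add \<Rightarrow> 'k::field"
  assumes "is_character \<theta>" shows "\<theta> (x [^]\<^bsub>additive_group\<^esub> n) = \<theta> x ^ n"
  by (induct n) (simp_all add: character_zero[OF assms] character_add[OF assms] mult.commute)

lemma character_sum:
  fixes \<theta> :: "'z::comm_monoid_add \<Rightarrow> 'k::field"
  assumes "is_character \<theta>" shows "\<theta> (\<Sum>a\<in>A. g a) = (\<Prod>a\<in>A. \<theta> (g a))"
  by (induct A rule: infinite_finite_induct) (simp_all add: character_zero[OF assms] character_add[OF assms])

lemma transl_character: "is_character \<theta> \<Longrightarrow> transl v \<theta> = fscale (\<theta> v) \<theta>"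
  by (simp add: transl_def fscale_def fun_eq_iff character_add mult.commute)

lemma subgroup_character_kernel:
  fixes \<Theta> :: "('z::ab_group_add \<Rightarrow> 'k::field) set"
  assumes "\<forall>\<theta>\<in>\<Theta>. is_character \<theta>"
  shows "subgroup {v. \<forall>\<theta>\<in>\<Theta>. \<theta> v = 1} additive_group"
  using assms by (intro subgroup_additive_groupI) (auto simp: character_zero character_diff)

lemma coset_character_kernel:
  fixes \<Theta> :: "('z::ab_group_add \<Rightarrow> 'k::field) set"
  assumes "\<forall>\<theta>\<in>\<Theta>. is_character \<theta>"
  shows "(\<lambda>w. v + w) ` {u. \<forall>\<theta>\<in>\<Theta>. \<theta> u = 1} = {w. \<forall>\<theta>\<in>\<Theta>. \<theta> w = \<theta> v}"
proof (intro equalityI subsetI)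
  fix w assume "w \<in> {w. \<forall>\<theta>\<in>\<Theta>. \<theta> w = \<theta> v}"
  then have "w - v \<in> {u. \<forall>\<theta>\<in>\<Theta>. \<theta> u = 1}"
    using assms by (auto simp: character_diff character_nonzero)
  then show "w \<in> (\<lambda>w. v + w) ` {u. \<forall>\<theta>\<in>\<Theta>. \<theta> u = 1}"
    by (intro image_eqI[of _ _ "w - v"]) simp_all
qed (use assms in \<open>auto simp: character_add\<close>)

text \<open>Artin's independence argument: translating by \<open>v\<close> and subtracting a multiple kills the
  term of some \<open>\<theta>' \<noteq> \<theta>\<^sub>0\<close> and keeps the coefficient of \<open>\<theta>\<^sub>0\<close> nonzero.\<close>
lemma character_mem_invariant_subspace:
  fixes E :: "('z::monoid_add \<Rightarrow> 'k::field) set"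
  assumes E: "fsubspace E" "translation_invariant E"
    and "finite S" "\<forall>\<theta>\<in>S. is_character \<theta>" "(\<Sum>\<theta>\<in>S. fscale (u \<theta>) \<theta>) \<in> E"
    and "\<theta>\<^sub>0 \<in> S" "u \<theta>\<^sub>0 \<noteq> 0"
  shows "\<theta>\<^sub>0 \<in> E"
  using assms(3-)
proof (induction "card S" arbitrary: S u rule: less_induct)
  case less
  define F where "F = (\<Sum>\<theta>\<in>S. fscale (u \<theta>) \<theta>)"
  show ?case
  proof (cases "S = {\<theta>\<^sub>0}")
    case True
    have "fscale (1 / u \<theta>\<^sub>0) F \<in> E"
      using fun_module.subspace_scale[OF E(1)] less.prems(3) by (simp add: F_def)
    moreover have "fscale (1 / u \<theta>\<^sub>0) F = \<theta>\<^sub>0"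
      using True less.prems(5) by (simp add: F_def fscale_def fun_eq_iff)
    ultimately show ?thesis
      by simp
  next
    case False
    then obtain \<theta>' where \<theta>': "\<theta>' \<in> S" "\<theta>' \<noteq> \<theta>\<^sub>0"
      using less.prems(4) by blast
    then have "\<exists>v. \<theta>' v \<noteq> \<theta>\<^sub>0 v"
      by (simp add: fun_eq_iff)
    then obtain v where v: "\<theta>\<^sub>0 v \<noteq> \<theta>' v"
      by metis
    define u' where "u' \<theta> = u \<theta> * (\<theta> v - \<theta>' v)" for \<theta>
    have "F \<in> E"
      using less.prems(3) by (simp add: F_def)
    moreover have "transl v F \<in> E"
      using E(2) \<open>F \<in> E\<close> unfolding translation_invariant_def by blast
    ultimately have "transl v F - fscale (\<theta>' v) F \<in> E"
      by (intro fun_module.subspace_diff[OF E(1)] fun_module.subspace_scale[OF E(1)])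
    moreover have "transl v F - fscale (\<theta>' v) F = (\<Sum>\<theta>\<in>S. fscale (u' \<theta>) \<theta>)"
    proof
      fix x
      have "(transl v F - fscale (\<theta>' v) F) x
          = (\<Sum>\<theta>\<in>S. u \<theta> * \<theta> (x + v)) - \<theta>' v * (\<Sum>\<theta>\<in>S. u \<theta> * \<theta> x)"
        by (simp add: F_def transl_def fscale_def sum_apply)
      also have "\<dots> = (\<Sum>\<theta>\<in>S. u \<theta> * \<theta> (x + v) - \<theta>' v * (u \<theta> * \<theta> x))"
        by (simp add: sum_distrib_left sum_subtractf)
      also have "\<dots> = (\<Sum>\<theta>\<in>S. u' \<theta> * \<theta> x)"
        using less.prems(2) by (intro sum.cong refl) (simp add: u'_def character_add algebra_simps)
      finally show "(transl v F - fscale (\<theta>' v) F) x = (\<Sum>\<theta>\<in>S. fscale (u' \<theta>) \<theta>) x"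
        by (simp add: sum_apply fscale_def)
    qed
    also have "\<dots> = (\<Sum>\<theta>\<in>S - {\<theta>'}. fscale (u' \<theta>) \<theta>)"
      using less.prems(1) \<theta>'(1) by (simp add: sum.remove u'_def fscale_def fun_eq_iff)
    ultimately have "(\<Sum>\<theta>\<in>S - {\<theta>'}. fscale (u' \<theta>) \<theta>) \<in> E"
      by simp
    moreover have "card (S - {\<theta>'}) < card S"
      using less.prems(1) \<theta>'(1) by (rule card_Diff1_less)
    moreover have "finite (S - {\<theta>'})"
      using less.prems(1) by simp
    moreover have "u' \<theta>\<^sub>0 \<noteq> 0"
      using less.prems(5) v by (simp add: u'_def)
    ultimately show ?thesis
      using less.hyps[of "S - {\<theta>'}" u'] less.prems(2,4) \<theta>'(2) by blast
  qed
qed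

lemma span_characters_inter_invariant_subspace:
  fixes E :: "('z::monoid_add \<Rightarrow> 'k::field) set"
  assumes E: "fsubspace E" "translation_invariant E"
    and C: "finite C" "\<forall>\<theta>\<in>C. is_character \<theta>" and "E \<subseteq> fspan C"
  shows "fspan (C \<inter> E) = E"
proof (rule fun_module.span_subspace)
  show "E \<subseteq> fspan (C \<inter> E)"
  proof
    fix f assume f: "f \<in> E"
    then obtain u where u: "f = (\<Sum>\<theta>\<in>C. fscale (u \<theta>) \<theta>)"
      using assms(5) fun_module.span_finite[OF C(1)] by blast
    have "fscale (u \<theta>) \<theta> \<in> fspan (C \<inter> E)" if "\<theta> \<in> C" for \<theta>
    proof (cases "u \<theta> = 0")
      case True
      then show ?thesis
        using fun_module.span_zero by (simp add: fscale_def fun_eq_iff zero_fun_def)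
    next
      case False
      then have "\<theta> \<in> E"
        using character_mem_invariant_subspace[OF E C] f u that by blast
      then show ?thesis
        using that by (intro fun_module.span_scale fun_module.span_base) blast
    qed
    then show "f \<in> fspan (C \<inter> E)"
      unfolding u by (intro fun_module.span_sum)
  qed
qed (use E in auto)

lemma period_lattice_subgroup: "subgroup (period_lattice E) additive_group"
proof (rule subgroup_additive_groupI)
  fix a b assume "a \<in> period_lattice E" "b \<in> period_lattice E"
  then have "f (x + (a - b)) = f x" if "f \<in> E" for f x
    using that fun_cong[of "transl a f" f "x - b"] fun_cong[of "transl b f" f "x - b"]
    unfolding period_lattice_def transl_def by (simp add: algebra_simps)
  then show "a - b \<in> period_lattice E"
    by (simp add: period_lattice_def transl_def fun_eq_iff)
qed (simp add: period_lattice_def transl_def)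

lemma period_lattice_span_characters:
  assumes "\<forall>\<theta>\<in>C. is_character \<theta>"
  shows "period_lattice (fspan C) = {v. \<forall>\<theta>\<in>C. \<theta> v = 1}"
proof (intro equalityI subsetI)
  fix v assume v: "v \<in> period_lattice (fspan C)"
  show "v \<in> {v. \<forall>\<theta>\<in>C. \<theta> v = 1}"
  proof (intro CollectI ballI)
    fix \<theta> assume \<theta>: "\<theta> \<in> C"
    then have "transl v \<theta> = \<theta>"
      using v fun_module.span_base[of \<theta> C] unfolding period_lattice_def by blast
    then have "\<theta> (0 + v) = \<theta> 0"
      unfolding transl_def by (rule fun_cong)
    then show "\<theta> v = 1"
      using assms \<theta> by (simp add: character_zero)
  qed
next
  fix v assume v: "v \<in> {v. \<forall>\<theta>\<in>C. \<theta> v = 1}"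
  have "fsubspace {f. transl v f = f}"
    unfolding fun_module.subspace_def by (auto simp: transl_def fscale_def fun_eq_iff)
  moreover have "C \<subseteq> {f. transl v f = f}"
    using v assms by (auto simp: transl_character fscale_def)
  ultimately have "fspan C \<subseteq> {f. transl v f = f}"
    by (rule fun_module.span_minimal[rotated])
  then show "v \<in> period_lattice (fspan C)"
    unfolding period_lattice_def by blast
qed

lemma characteristic_subspace_imp_sublattice:
  fixes E :: "('z::monoid_add \<Rightarrow> 'k::field) set"
  assumes "characteristic_subspace E"
  shows "characteristic_sublattice (period_lattice E) TYPE('k)"
proof -
  obtain C where C: "finite C" "\<forall>\<theta>\<in>C. is_character \<theta>" "fspan C = E"
    using assms unfolding characteristic_subspace_def by blast
  then have "period_lattice E = {v. \<forall>\<theta>\<in>C. \<theta> v = 1}"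
    using period_lattice_span_characters by blast
  with C(1,2) show ?thesis
    unfolding characteristic_sublattice_def by blast
qed

section \<open>Finite fields and roots of unity\<close>

lemma power_CHAR_power_eq_1_iff:
  fixes z :: "'a::field"
  assumes "prime CHAR('a)"
  shows "z ^ (CHAR('a) ^ n) = 1 \<longleftrightarrow> z = 1"
proof
  assume "z ^ (CHAR('a) ^ n) = 1"
  moreover have "((z - 1) + 1) ^ (CHAR('a) ^ n) = (z - 1) ^ (CHAR('a) ^ n) + 1 ^ (CHAR('a) ^ n)"
    by (rule freshmans_dream'[OF assms refl])
  ultimately show "z = 1"
    by simp
qed simp

lemma CHAR_eq_if_card_eq_prime_power:
  assumes "prime p" "CARD('f::{field,finite}) = p ^ r"
  shows "CHAR('f) = p"
proof -
  have "prime CHAR('f)"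
    by (intro prime_CHAR_semidom finite_imp_CHAR_pos) simp
  moreover have "CHAR('f) dvd p ^ r"
    using CHAR_dvd_CARD[where 'a='f] assms(2) by simp
  ultimately show ?thesis
    using assms(1) by (simp add: prime_dvd_power primes_dvd_imp_eq)
qed

lemma of_nat_nonzero_if_coprime_CHAR:
  assumes "prime CHAR('a::semiring_1)" "coprime n CHAR('a)"
  shows "of_nat n \<noteq> (0::'a)"
proof
  assume "of_nat n = (0::'a)"
  then have "CHAR('a) dvd n"
    by (simp add: of_nat_eq_0_iff_char_dvd)
  then have "is_unit CHAR('a)"
    using coprime_common_divisor[OF assms(2) _ dvd_refl] by blast
  then show False
    using assms(1) not_prime_unit by blast
qed

lemma root_of_unity_nonzero: "z ^ N = 1 \<Longrightarrow> N > 0 \<Longrightarrow> z \<noteq> (0::'a::semiring_1)"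
  by (auto simp: power_0_left)

lemma roots_of_unity_poly: "{z::'a::field. z ^ N = 1} = {z. poly ([:-1:] + monom 1 N) z = 0}"
  by (auto simp: poly_monom)

lemma degree_roots_of_unity_poly:
  "N > 0 \<Longrightarrow> degree ([:-1:] + monom (1::'a::field) N) = N"
  by (subst degree_add_eq_right) (auto simp: degree_monom_eq)

lemma roots_of_unity_poly_nonzero:
  assumes "N > 0" shows "[:-1:] + monom (1::'a::field) N \<noteq> 0"
  using degree_roots_of_unity_poly[OF assms] assms by (metis degree_0 less_irrefl)

lemma finite_roots_of_unity: "N > 0 \<Longrightarrow> finite {z::'a::field. z ^ N = 1}"
  unfolding roots_of_unity_poly by (rule poly_roots_finite[OF roots_of_unity_poly_nonzero])

lemma card_roots_of_unity_le:
  assumes "N > 0" shows "card {z::'a::field. z ^ N = 1} \<le> N"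
  using card_poly_roots_bound[OF roots_of_unity_poly_nonzero[OF assms]]
  unfolding roots_of_unity_poly degree_roots_of_unity_poly[OF assms] .

lemma poly_pderiv_double_root:
  fixes p :: "'a::idom poly"
  assumes "[:-a, 1:] ^ 2 dvd p"
  shows "poly (pderiv p) a = 0"
proof -
  define L where "L = [:-a, 1:]"
  obtain q where "p = L ^ 2 * q"
    using assms unfolding L_def by (elim dvdE)
  then have "p = L * (L * q)"
    by (simp add: power2_eq_square mult.assoc)
  moreover have "poly L a = 0"
    by (simp add: L_def)
  ultimately show ?thesis
    by (simp add: pderiv_mult)
qed

lemma card_roots_of_unity_alg_closed:
  assumes "N > 0" "of_nat N \<noteq> (0::'a::alg_closed_field)"
  shows "card {z::'a. z ^ N = 1} = N"
proof -
  define P :: "'a poly" where "P = [:-1:] + monom 1 N"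
  have "P \<noteq> 0" "degree P = N"
    unfolding P_def using assms(1) roots_of_unity_poly_nonzero degree_roots_of_unity_poly by auto
  moreover have "lead_coeff P = 1"
    using assms(1) \<open>degree P = N\<close> by (cases N) (simp_all add: P_def)
  ultimately obtain A where A: "size A = N" "P = (\<Prod>x\<in>#A. [:-x, 1:])"
    using alg_closed_imp_factorization[of P] by auto
  have roots: "{z. z ^ N = 1} = set_mset A"
    unfolding roots_of_unity_poly P_def[symmetric] A(2)
    by (auto simp: poly_prod_mset prod_mset_zero_iff)
  have simple: "count A y = 1" if "y \<in># A" for y
  proof (rule ccontr)
    assume "count A y \<noteq> 1"
    moreover have "count A y > 0"
      using that by simp
    ultimately have "2 \<le> count A y"
      by linarith
    then have "replicate_mset 2 y \<subseteq># A"
      by (simp only: count_le_replicate_mset_subset_eq)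
    then have "(\<Prod>x\<in>#replicate_mset 2 y. [:-x, 1:]) dvd (\<Prod>x\<in>#A. [:-x, 1:])"
      by (intro prod_mset_subset_imp_dvd image_mset_subseteq_mono)
    then have "poly (pderiv P) y = 0"
      unfolding A(2) by (intro poly_pderiv_double_root) simp
    moreover have "pderiv P = monom (of_nat N) (N - 1)"
      by (simp add: P_def pderiv_add pderiv_monom)
    moreover have "y ^ N = 1"
      using that roots by blast
    then have "y \<noteq> 0"
      using assms(1) by (auto simp: power_0_left)
    ultimately show False
      using assms(2) by (simp add: poly_monom)
  qed
  have "N = sum (count A) (set_mset A)"
    using A(1) by (simp add: size_multiset_overloaded_eq)
  also have "\<dots> = card {z::'a. z ^ N = 1}"
    using simple roots by simp
  finally show ?thesis ..
qed

lemma sum_roots_of_unity_power: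
  fixes k :: nat
  assumes card: "card {z::'a::field. z ^ N = 1} = N" and k: "0 < k" "k < N"
  shows "(\<Sum>z | z ^ N = 1. z ^ k) = (0::'a)"
proof -
  define R where "R = {z::'a. z ^ N = 1}"
  obtain w where w: "w \<in> R" "w ^ k \<noteq> 1"
  proof (rule ccontr)
    assume "\<not> thesis"
    then have "R \<subseteq> {z. z ^ k = 1}"
      using that by blast
    then have "card R \<le> card {z::'a. z ^ k = 1}"
      using k(1) by (intro card_mono finite_roots_of_unity)
    also have "\<dots> \<le> k"
      using k(1) by (rule card_roots_of_unity_le)
    finally have "card R \<le> k" .
    then show False
      using card k(2) by (simp add: R_def)
  qed
  then have "w \<noteq> 0"
    using k by (auto simp: R_def power_0_left)
  have "(\<Sum>z\<in>R. z ^ k) = (\<Sum>z\<in>R. (w * z) ^ k)"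
    by (rule sum.reindex_bij_witness[of _ "\<lambda>z. w * z" "\<lambda>z. z / w"])
      (use w \<open>w \<noteq> 0\<close> in \<open>auto simp: R_def power_mult_distrib power_divide\<close>)
  also have "\<dots> = w ^ k * (\<Sum>z\<in>R. z ^ k)"
    by (simp add: power_mult_distrib sum_distrib_left)
  finally have "(1 - w ^ k) * (\<Sum>z\<in>R. z ^ k) = 0"
    by (simp add: algebra_simps)
  then show ?thesis
    using w(2) by (simp add: R_def)
qed

lemma power_int_eq_power_mod:
  fixes z :: "'a::field"
  assumes "z ^ N = 1" "N > 0"
  shows "z powi t = z ^ nat (t mod int N)"
proof -
  have "z \<noteq> 0"
    using assms by (auto simp: power_0_left)
  have "z powi (int N * (t div int N)) = 1"
    using assms(1) by (simp flip: power_int_power)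
  moreover have "z powi t = z powi (int N * (t div int N)) * z powi (t mod int N)"
    using \<open>z \<noteq> 0\<close> by (simp flip: power_int_add)
  ultimately show ?thesis
    using assms(2) by (simp add: power_int_nonneg_exp)
qed

lemma sum_roots_of_unity_power_int:
  assumes "N > 0" "card {z::'a::field. z ^ N = 1} = N"
  shows "(\<Sum>z | z ^ N = 1. z powi t) = (if int N dvd t then of_nat N else (0::'a))"
proof -
  have "z powi t = z ^ nat (t mod int N)" if "z ^ N = 1" for z :: 'a
    using that assms(1) by (rule power_int_eq_power_mod)
  then have "(\<Sum>z | z ^ N = 1. z powi t) = (\<Sum>z | z ^ N = 1. z ^ nat (t mod int N) :: 'a)"
    by (intro sum.cong refl) blast
  also have "\<dots> = (if int N dvd t then of_nat N else 0)"
  proof (cases "int N dvd t")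
    case False
    moreover have "0 \<le> t mod int N" "t mod int N < int N"
      using assms(1) by simp_all
    ultimately have "0 < nat (t mod int N)" "nat (t mod int N) < N"
      by (auto simp: dvd_eq_mod_eq_0)
    then show ?thesis
      using False sum_roots_of_unity_power[OF assms(2)] by simp
  qed (use assms(2) in simp)
  finally show ?thesis .
qed

lemma map_poly_to_ac_add: "map_poly to_ac (p + q) = map_poly to_ac p + map_poly to_ac q"
  by (rule poly_eqI) (simp add: coeff_map_poly)

lemma map_poly_to_ac_mult: "map_poly to_ac (p * q) = map_poly to_ac p * map_poly to_ac q"
  by (rule poly_eqI) (simp add: coeff_map_poly coeff_mult to_ac_sum)

lemma finite_range_power_imp_root_of_unity:
  fixes x :: "'a::field"
  assumes "x \<noteq> 0" "finite (range (\<lambda>k::nat. x ^ k))"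
  shows "\<exists>m>0. x ^ m = 1"
proof -
  have "\<not> inj (\<lambda>k::nat. x ^ k)"
    using assms(2) finite_imageD infinite_UNIV_nat by blast
  then obtain a b :: nat where "a < b" "x ^ a = x ^ b"
    unfolding inj_def by (metis linorder_neqE_nat)
  moreover have "x ^ b = x ^ a * x ^ (b - a)"
    using \<open>a < b\<close> by (simp flip: power_add)
  ultimately have "x ^ a * x ^ (b - a) = x ^ a * 1"
    by simp
  then have "x ^ (b - a) = 1"
    using assms(1) by simp
  with \<open>a < b\<close> show ?thesis
    by (intro exI[of _ "b - a"]) simp
qed

text \<open>Each power of \<open>x\<close> is the value at \<open>x\<close> of a remainder modulo a polynomial over \<open>'f\<close>
  annihilating \<open>x\<close>; as \<open>'f\<close> is finite, there are only finitely many such remainders.\<close>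
lemma alg_closure_root_of_unity:
  fixes x :: "'f::{field,finite} alg_closure"
  assumes "x \<noteq> 0"
  shows "\<exists>m>0. x ^ m = 1"
proof (rule finite_range_power_imp_root_of_unity[OF assms])
  obtain P :: "'f poly" where P: "P \<noteq> 0" "poly (map_poly to_ac P) x = 0"
    by (rule alg_closure_algebraic)
  define ev where "ev q = poly (map_poly to_ac q) x" for q
  have powers: "x ^ k \<in> ev ` Poly ` {cs. set cs \<subseteq> UNIV \<and> length cs \<le> degree P}" for k
  proof -
    define q where "q = monom 1 k mod P"
    have "monom 1 k = monom 1 k div P * P + q"
      unfolding q_def by simp
    then have "ev (monom 1 k) = ev (monom 1 k div P) * ev P + ev q"
      unfolding ev_def by (metis map_poly_to_ac_add map_poly_to_ac_mult poly_add poly_mult)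
    then have "x ^ k = ev q"
      using P(2) by (simp add: ev_def map_poly_monom poly_monom)
    moreover have "length (coeffs q) \<le> degree P"
    proof (cases "q = 0")
      case False
      then have "degree q < degree P"
        using degree_mod_less'[OF P(1)] unfolding q_def by blast
      with False show ?thesis
        by (simp add: length_coeffs_degree)
    qed simp
    ultimately show ?thesis
      by (intro image_eqI[of _ _ q] image_eqI[of _ _ "coeffs q"]) auto
  qed
  have fin: "finite (ev ` Poly ` {cs :: 'f list. set cs \<subseteq> UNIV \<and> length cs \<le> degree P})"
    by (intro finite_imageI finite_lists_length_le) simp
  show "finite (range (\<lambda>k::nat. x ^ k))"
    using powers by (intro finite_subset[OF _ fin]) auto
qed

section \<open>Characters of \<open>\<int>\<^sup>n\<close>\<close>

definition power_character :: "('n::finite \<Rightarrow> 'k::field) \<Rightarrow> int ^ 'n \<Rightarrow> 'k" where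
  "power_character z x = (\<Prod>i\<in>UNIV. z i powi (x $ i))"

lemma is_character_power_character:
  assumes "\<And>i. z i \<noteq> 0"
  shows "is_character (power_character z)"
  using assms
  by (auto simp: is_character_def power_character_def power_int_add power_int_not_zero prod.distrib)

lemma character_axis:
  fixes \<theta> :: "int ^ 'n \<Rightarrow> 'k::field"
  assumes "is_character \<theta>"
  shows "\<theta> (axis i k) = \<theta> (axis i 1) powi k"
proof (induction k rule: int_induct[where k = 0])
  case base
  show ?case
    using character_zero[OF assms] by (simp add: axis_def zero_vec_def)
next
  case (step1 k)
  have "axis i (k + 1) = axis i k + axis i 1"
    by (simp add: axis_def vec_eq_iff)
  with step1 show ?case
    using character_nonzero[OF assms] by (simp add: character_add[OF assms] power_int_add)
next
  case (step2 k)
  have "axis i (k - 1) = axis i k - axis i 1"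
    by (simp add: axis_def vec_eq_iff)
  with step2 show ?case
    using character_nonzero[OF assms] by (simp add: character_diff[OF assms] power_int_diff)
qed

lemma character_eq_power_character:
  fixes \<theta> :: "int ^ 'n \<Rightarrow> 'k::field"
  assumes "is_character \<theta>"
  shows "\<theta> x = power_character (\<lambda>i. \<theta> (axis i 1)) x"
proof -
  have "(\<Sum>i\<in>UNIV. axis i (x $ i)) = x"
    by (simp add: vec_eq_iff axis_def)
  then have "\<theta> x = (\<Prod>i\<in>UNIV. \<theta> (axis i (x $ i)))"
    using character_sum[OF assms, of "\<lambda>i. axis i (x $ i)" UNIV] by simp
  also have "\<dots> = power_character (\<lambda>i. \<theta> (axis i 1)) x"
    unfolding power_character_def by (intro prod.cong refl character_axis[OF assms])
  finally show ?thesis .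
qed

lemma character_power_eq_1:
  fixes \<theta> :: "int ^ 'n \<Rightarrow> 'k::field"
  assumes "is_character \<theta>" "\<And>i. \<theta> (axis i 1) ^ M = 1"
  shows "\<theta> x ^ M = 1"
proof -
  have "\<theta> x ^ M = (\<Prod>i\<in>UNIV. (\<theta> (axis i 1) powi (x $ i)) ^ M)"
    by (subst character_eq_power_character[OF assms(1), of x])
      (simp add: power_character_def prod_power_distrib)
  also have "\<dots> = (\<Prod>i\<in>UNIV. (\<theta> (axis i 1) ^ M) powi (x $ i))"
    by (simp add: power_int_power power_int_power' mult.commute)
  finally show ?thesis
    using assms(2) by simp
qed

lemma lattice_index_character_kernel_pos:
  fixes \<Theta> :: "(int ^ 'n \<Rightarrow> 'k::field) set"
  assumes fin: "finite \<Theta>" and chars: "\<forall>\<theta>\<in>\<Theta>. is_character \<theta>"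
    and torsion: "\<And>x::'k. x \<noteq> 0 \<Longrightarrow> \<exists>m>0. x ^ m = 1"
  shows "lattice_index {v. \<forall>\<theta>\<in>\<Theta>. \<theta> v = 1} > 0"
proof -
  define L where "L = {v. \<forall>\<theta>\<in>\<Theta>. \<theta> v = 1}"
  define ord where "ord \<theta> i = (SOME m. m > 0 \<and> \<theta> (axis i 1) ^ m = 1)"
    for \<theta> :: "int ^ 'n \<Rightarrow> 'k" and i :: 'n
  have ord: "ord \<theta> i > 0 \<and> \<theta> (axis i 1) ^ ord \<theta> i = 1" if "\<theta> \<in> \<Theta>" for \<theta> i
  proof -
    have "\<exists>m>0. \<theta> (axis i 1) ^ m = 1"
      using chars that by (intro torsion character_nonzero) blast
    then show ?thesis
      unfolding ord_def by (rule someI_ex)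
  qed
  define M where "M = (\<Prod>\<theta>\<in>\<Theta>. \<Prod>i\<in>UNIV. ord \<theta> i)"
  have "M > 0"
    unfolding M_def using ord by (simp add: prod_pos)
  have M: "\<theta> v ^ M = 1" if "\<theta> \<in> \<Theta>" for \<theta> v
  proof (rule character_power_eq_1)
    show "is_character \<theta>"
      using chars that by blast
    fix i
    have "ord \<theta> i dvd M"
      unfolding M_def using fin that
      by (intro dvd_trans[OF dvd_prodI[of UNIV i] dvd_prodI[of \<Theta> \<theta>]]) simp_all
    then obtain k where "M = ord \<theta> i * k" ..
    then show "\<theta> (axis i 1) ^ M = 1"
      using ord[OF that, of i] by (simp add: power_mult)
  qed
  \<comment> \<open>Cosets of the kernel are the fibres of \<open>v \<mapsto> (\<theta> v)\<^sub>\<theta>\<close>, whose values are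
    \<open>M\<close>-th roots of unity.\<close>
  define \<Psi> where "\<Psi> v = restrict (\<lambda>\<theta>. \<theta> v) \<Theta>" for v
  have fibre: "(\<lambda>w. v + w) ` L = {w. \<Psi> w = \<Psi> v}" for v
    unfolding L_def coset_character_kernel[OF chars] \<Psi>_def
    by (auto simp: restrict_def fun_eq_iff)
  have "range \<Psi> \<subseteq> \<Theta> \<rightarrow>\<^sub>E {z. z ^ M = 1}"
    using M by (auto simp: \<Psi>_def)
  then have "finite (range \<Psi>)"
    using fin finite_roots_of_unity[OF \<open>M > 0\<close>] by (rule finite_subset[OF _ finite_PiE])
  then have "finite ((\<lambda>v. (\<lambda>w. v + w) ` L) ` UNIV)"
    unfolding fibre using finite_imageI[of "range \<Psi>" "\<lambda>\<psi>. {w. \<Psi> w = \<psi>}"]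
    by (simp add: image_image)
  then show ?thesis
    unfolding L_def[symmetric] lattice_index_def by (simp add: card_gt_0_iff)
qed

lemma coprime_lattice_index_character_kernel:
  fixes \<Theta> :: "('z::ab_group_add \<Rightarrow> 'k::field) set"
  assumes char: "prime CHAR('k)" and chars: "\<forall>\<theta>\<in>\<Theta>. is_character \<theta>"
    and pos: "lattice_index {v. \<forall>\<theta>\<in>\<Theta>. \<theta> v = 1} > 0"
  shows "coprime (lattice_index {v. \<forall>\<theta>\<in>\<Theta>. \<theta> v = 1}) CHAR('k)"
proof -
  let ?L = "{v. \<forall>\<theta>\<in>\<Theta>. \<theta> v = 1}"
  have "\<not> CHAR('k) dvd lattice_index ?L"
  proof
    assume "CHAR('k) dvd lattice_index ?L"
    then obtain v a where v: "v \<notin> ?L" and pow: "v [^]\<^bsub>additive_group\<^esub> (CHAR('k) ^ a) \<in> ?L"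
      using prime_dvd_lattice_index_imp_torsion[OF subgroup_character_kernel[OF chars] pos char]
      by blast
    have "\<theta> v = 1" if "\<theta> \<in> \<Theta>" for \<theta>
    proof -
      have "\<theta> (v [^]\<^bsub>additive_group\<^esub> (CHAR('k) ^ a)) = 1"
        using pow that by blast
      then show ?thesis
        using chars that by (simp add: character_pow power_CHAR_power_eq_1_iff[OF char])
    qed
    with v show False
      by blast
  qed
  then show ?thesis
    using char by (simp add: prime_imp_coprime coprime_commute)
qed

lemma characteristic_sublattice_imp_coprime_index:
  fixes L :: "(int ^ 'n) set"
  assumes "characteristic_sublattice L TYPE('k::field)" "prime CHAR('k)"
    and "\<And>x::'k. x \<noteq> 0 \<Longrightarrow> \<exists>m>0. x ^ m = 1"
  shows "lattice_index L > 0 \<and> coprime (lattice_index L) CHAR('k)"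
proof -
  obtain \<Theta> :: "(int ^ 'n \<Rightarrow> 'k) set"
    where \<Theta>: "finite \<Theta>" "\<forall>\<theta>\<in>\<Theta>. is_character \<theta>" and L: "L = {v. \<forall>\<theta>\<in>\<Theta>. \<theta> v = 1}"
    using assms(1) unfolding characteristic_sublattice_def by blast
  have "lattice_index L > 0"
    unfolding L using \<Theta> assms(3) by (rule lattice_index_character_kernel_pos)
  moreover have "coprime (lattice_index L) CHAR('k)"
    unfolding L using assms(2) \<Theta>(2) \<open>lattice_index L > 0\<close>[unfolded L]
    by (rule coprime_lattice_index_character_kernel)
  ultimately show ?thesis ..
qed

section \<open>Periodic functions and characteristic subspaces\<close>

lemma indicator_congruent_eq_sum_power_characters:
  fixes x a :: "int ^ 'n" and N :: nat
  assumes N: "N > 0" "of_nat N \<noteq> (0::'k::field)" "card {z::'k. z ^ N = 1} = N"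
  shows "(\<Sum>z\<in>UNIV \<rightarrow>\<^sub>E {z::'k::field. z ^ N = 1}.
            (\<Prod>i\<in>UNIV. z i powi (- (a $ i)) / of_nat N) * power_character z x)
       = (if \<forall>i. int N dvd x $ i - a $ i then 1 else 0)"
proof -
  define R where "R = {z::'k. z ^ N = 1}"
  have "(\<Sum>z\<in>UNIV \<rightarrow>\<^sub>E R. (\<Prod>i\<in>UNIV. z i powi (- (a $ i)) / of_nat N) * power_character z x)
      = (\<Sum>z\<in>UNIV \<rightarrow>\<^sub>E R. \<Prod>i\<in>UNIV. z i powi (x $ i - a $ i) / of_nat N)"
  proof (intro sum.cong refl)
    fix z :: "'n \<Rightarrow> 'k" assume "z \<in> UNIV \<rightarrow>\<^sub>E R"
    then have "z i \<noteq> 0" for i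
      using root_of_unity_nonzero[OF _ N(1)] by (auto simp: R_def)
    then have "z i powi (x $ i - a $ i) = z i powi (- (a $ i)) * z i powi (x $ i)" for i
      using power_int_add[of "z i" "- (a $ i)" "x $ i"] by simp
    then have "(\<Prod>i\<in>UNIV. z i powi (- (a $ i)) / of_nat N * z i powi (x $ i))
        = (\<Prod>i\<in>UNIV. z i powi (x $ i - a $ i) / of_nat N)"
      by (intro prod.cong refl) simp
    then show "(\<Prod>i\<in>UNIV. z i powi (- (a $ i)) / of_nat N) * power_character z x
        = (\<Prod>i\<in>UNIV. z i powi (x $ i - a $ i) / of_nat N)"
      by (simp only: power_character_def prod.distrib[symmetric])
  qed
  also have "\<dots> = (\<Prod>i\<in>UNIV. \<Sum>\<zeta>\<in>R. \<zeta> powi (x $ i - a $ i) / of_nat N)"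
    using finite_roots_of_unity[OF N(1)] by (intro prod_sum_PiE[symmetric]) (auto simp: R_def)
  also have "\<dots> = (\<Prod>i\<in>UNIV. if int N dvd x $ i - a $ i then 1 else 0)"
  proof (intro prod.cong refl)
    fix i
    show "(\<Sum>\<zeta>\<in>R. \<zeta> powi (x $ i - a $ i) / of_nat N) = (if int N dvd x $ i - a $ i then 1 else 0)"
      using N by (simp add: R_def sum_roots_of_unity_power_int flip: sum_divide_distrib)
  qed
  also have "\<dots> = (if \<forall>i. int N dvd x $ i - a $ i then 1 else 0)"
    by (simp add: prod.neutral prod_zero_iff)
  finally show ?thesis
    by (simp add: R_def)
qed

lemma periodic_in_span_power_characters:
  fixes f :: "int ^ 'n \<Rightarrow> 'k::field"
  assumes N: "N > 0" "of_nat N \<noteq> (0::'k)" "card {z::'k. z ^ N = 1} = N"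
    and periodic: "\<And>x v. f (x + of_nat N * v) = f x"
  shows "f \<in> fspan (power_character ` (UNIV \<rightarrow>\<^sub>E {z::'k. z ^ N = 1}))"
proof -
  define Z where "Z = (UNIV :: 'n set) \<rightarrow>\<^sub>E {z::'k. z ^ N = 1}"
  define c where "c a z = (\<Prod>i\<in>UNIV. z i powi (- (a $ i)) / of_nat N)" for a :: "int ^ 'n" and z :: "'n \<Rightarrow> 'k"
  define red where "red x = (\<chi> i. x $ i mod int N)" for x :: "int ^ 'n"
  have "finite Z"
    using finite_roots_of_unity[OF N(1)] by (auto simp: Z_def intro!: finite_PiE)
  have "range red \<subseteq> vec_lambda ` (UNIV \<rightarrow>\<^sub>E {0..<int N})"
  proof
    fix y assume "y \<in> range red"
    then obtain x where "y = red x"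
      by blast
    moreover have "(\<lambda>i. x $ i mod int N) \<in> UNIV \<rightarrow>\<^sub>E {0..<int N}"
      using N(1) by (simp add: PiE_iff)
    ultimately show "y \<in> vec_lambda ` (UNIV \<rightarrow>\<^sub>E {0..<int N})"
      unfolding red_def by blast
  qed
  then have "finite (range red)"
    by (rule finite_subset) (intro finite_imageI finite_PiE; simp)
  have congruent_iff: "(\<forall>i. int N dvd x $ i - a $ i) \<longleftrightarrow> a = red x"
    if a: "a \<in> range red" for a x
  proof -
    obtain y where y: "a = red y"
      using a by blast
    have "(\<forall>i. int N dvd x $ i - a $ i) \<longleftrightarrow> (\<forall>i. x $ i mod int N = a $ i mod int N)"
      by (simp add: mod_eq_dvd_iff)
    also have "\<dots> \<longleftrightarrow> a = red x"
      by (auto simp: y red_def vec_eq_iff)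
    finally show ?thesis .
  qed
  have f_red: "f (red x) = f x" for x
  proof -
    have "red x + of_nat N * (\<chi> i. x $ i div int N) = x"
      by (simp add: red_def vec_eq_iff of_nat_index)
    then show ?thesis
      using periodic[of "red x" "\<chi> i. x $ i div int N"] by (simp only:)
  qed
  define g where "g = (\<Sum>a\<in>range red. \<Sum>z\<in>Z. fscale (f a * c a z) (power_character z))"
  have "g x = f x" for x
  proof -
    have "g x = (\<Sum>a\<in>range red. f a * (\<Sum>z\<in>Z. c a z * power_character z x))"
      by (simp add: g_def sum_apply fscale_def sum_distrib_left mult.assoc)
    also have "\<dots> = (\<Sum>a\<in>range red. f a * (if \<forall>i. int N dvd x $ i - a $ i then 1 else 0))"
      unfolding Z_def c_def indicator_congruent_eq_sum_power_characters[OF N] ..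
    also have "\<dots> = (\<Sum>a\<in>range red. if a = red x then f a else 0)"
      by (intro sum.cong refl) (simp add: congruent_iff)
    also have "\<dots> = f x"
      using \<open>finite (range red)\<close> by (simp add: f_red)
    finally show ?thesis .
  qed
  then have "f = g"
    by (simp add: fun_eq_iff)
  also have "g \<in> fspan (power_character ` Z)"
    unfolding g_def by (intro fun_module.span_sum fun_module.span_scale fun_module.span_base imageI)
  finally show ?thesis
    unfolding Z_def .
qed

lemma characteristic_subspace_if_index_invertible:
  fixes E :: "(int ^ 'n \<Rightarrow> 'k::alg_closed_field) set"
  assumes E: "fsubspace E" "translation_invariant E"
    and pos: "lattice_index (period_lattice E) > 0"
    and invertible: "of_nat (lattice_index (period_lattice E)) \<noteq> (0::'k)"
  shows "characteristic_subspace E"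
proof -
  define N where "N = lattice_index (period_lattice E)"
  define C where "C = power_character ` ((UNIV :: 'n set) \<rightarrow>\<^sub>E {z::'k. z ^ N = 1})"
  have N: "N > 0" "of_nat N \<noteq> (0::'k)" "card {z::'k. z ^ N = 1} = N"
    using pos invertible card_roots_of_unity_alg_closed by (simp_all add: N_def)
  have "finite C"
    using finite_roots_of_unity[OF N(1)] by (auto simp: C_def intro!: finite_imageI finite_PiE)
  moreover have chars: "\<forall>\<theta>\<in>C. is_character \<theta>"
    by (auto simp: C_def PiE_iff intro!: is_character_power_character root_of_unity_nonzero[OF _ N(1)])
  moreover have "E \<subseteq> fspan C"
  proof
    fix f assume "f \<in> E"
    have "of_nat N * v \<in> period_lattice E" for v
      using lattice_index_pow_mem[OF period_lattice_subgroup pos, of v]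
      by (simp add: additive_group_pow N_def)
    then have "transl (of_nat N * v) f = f" for v
      using \<open>f \<in> E\<close> unfolding period_lattice_def by blast
    then have "f (x + of_nat N * v) = f x" for x v
      using fun_cong by (fastforce simp: transl_def)
    then show "f \<in> fspan C"
      unfolding C_def by (rule periodic_in_span_power_characters[OF N])
  qed
  ultimately have "fspan (C \<inter> E) = E"
    by (rule span_characters_inter_invariant_subspace[OF E])
  then show ?thesis
    unfolding characteristic_subspace_def using \<open>finite C\<close> chars by blast
qed

theorem proposition5p11:
  fixes p r :: nat
    and E :: "(int ^ 'n \<Rightarrow> 'f::{field,finite} alg_closure) set"
  assumes "prime p" and "r > 0" and "CARD('f) = p ^ r"
    and "fin_dim_subspace E"
    and "translation_invariant E"
  shows "(characteristic_subspace E \<longleftrightarrow>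
            characteristic_sublattice (period_lattice E) TYPE('f alg_closure))
       \<and> (characteristic_subspace E \<longleftrightarrow>
            (lattice_index (period_lattice E) > 0 \<and> coprime (lattice_index (period_lattice E)) p))"
proof -
  let ?L = "period_lattice E"
  have char: "CHAR('f) = p"
    using assms(1,3) by (rule CHAR_eq_if_card_eq_prime_power)
  then have prime: "prime CHAR('f alg_closure)"
    using assms(1) by simp
  have E: "fsubspace E"
    using assms(4) unfolding fin_dim_subspace_def by blast
  have "characteristic_subspace E \<Longrightarrow> characteristic_sublattice ?L TYPE('f alg_closure)"
    by (rule characteristic_subspace_imp_sublattice)
  moreover have "characteristic_sublattice ?L TYPE('f alg_closure) \<Longrightarrow>
      lattice_index ?L > 0 \<and> coprime (lattice_index ?L) p"
    using characteristic_sublattice_imp_coprime_index[OF _ prime alg_closure_root_of_unity] char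
    by simp
  moreover have "lattice_index ?L > 0 \<and> coprime (lattice_index ?L) p \<Longrightarrow> characteristic_subspace E"
    using characteristic_subspace_if_index_invertible[OF E assms(5)]
      of_nat_nonzero_if_coprime_CHAR[OF prime] char
    by simp
  ultimately show ?thesis
    by blast
qed

end
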